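(* For a nonnegative integer $q$ let $\wp(q)=\int_0^{\frac{\pi}{2}}z\sin^qz\,\mathrm{d}z$. Then for every nonnegative integer $n$, $$\wp(2n)=\frac{\binom{2n}{n}}{4^{n+1}}\left(\frac{\pi^2}{2}+\sum_{k=1}^n\frac{4^k}{k^2\binom{2k}{k}}\right),\qquad \wp(2n+1)=\frac{4^n}{(2n+1)\binom{2n}{n}}\left(1+\sum_{k=1}^n\frac{\binom{2k}{k}}{4^k(2k+1)}\right).$$ *)

theory Defs
  imports "HOL-Analysis.Analysis"
begin

definition wp :: "nat \<Rightarrow> real" where
  "wp q = integral {0..pi/2} (\<lambda>z. z * sin z ^ q)"

end

theory Submission
  imports Defs
begin

(* Integrating by parts twice, i.e. differentiating
   F z = sin z ^ (m+2) - (m+2) z sin z ^ (m+1) cos z and using cos^2 = 1 - sin^2,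
   gives the recurrence (m+2)^2 wp (m+2) = (m+2)(m+1) wp m + 1 with wp 0 = pi^2/8 and wp 1 = 1.
   Since binom(2n+2, n+1) = 2(2n+1)/(n+1) binom(2n, n), both closed forms satisfy the same
   recurrence, so each follows by induction on n. *)

lemma central_binomial_Suc:
  "real ((2 * Suc n) choose Suc n) = 2 * (2 * real n + 1) / (real n + 1) * real ((2 * n) choose n)"
proof -
  have "2 * Suc n = Suc (Suc (2 * n))"
    by simp
  then have fact2: "fact (2 * Suc n) = (2 * real n + 2) * (2 * real n + 1) * fact (2 * n)"
    by (simp only: fact_Suc) (simp add: algebra_simps)
  have fact1: "fact (Suc n) = (real n + 1) * fact n"
    by simp
  have "real ((2 * Suc n) choose Suc n) = fact (2 * Suc n) / (fact (Suc n) * fact (Suc n))"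
    by (subst binomial_fact) auto
  also have "\<dots> = 2 * (2 * real n + 1) / (real n + 1) * (fact (2 * n) / (fact n * fact n))"
    unfolding fact1 fact2 by (simp add: divide_simps) (simp add: algebra_simps)
  also have "fact (2 * n) / (fact n * fact n) = real ((2 * n) choose n)"
    by (subst binomial_fact) auto
  finally show ?thesis .
qed

lemma has_integral_wp: "((\<lambda>z. z * sin z ^ q) has_integral wp q) {0..pi/2}"
  unfolding wp_def by (intro integrable_integral integrable_continuous_interval continuous_intros)

lemma wp_recurrence: "real (m+2)^2 * wp (m+2) = real (m+2) * real (m+1) * wp m + 1"
proof -
  define F where "F z = sin z ^ (m+2) - real (m+2) * z * sin z ^ (m+1) * cos z" for z
  define f where "f z = real (m+2)^2 * (z * sin z ^ (m+2)) - real (m+2) * real (m+1) * (z * sin z ^ m)" for z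
  have "(F has_real_derivative f z) (at z)" for z
  proof (rule DERIV_cong)
    show "(F has_real_derivative real (m+2) * sin z ^ (m+1) * cos z
        - real (m+2) * (sin z ^ (m+1) * cos z + z * (real (m+1) * sin z ^ m * cos z * cos z - sin z ^ (m+1) * sin z))) (at z)"
      unfolding F_def by (rule derivative_eq_intros refl | simp)+ algebra
    have "cos z * cos z = 1 - sin z * sin z"
      using sin_squared_eq[of z] by (simp add: power2_eq_square)
    then have cos_sq: "cos z * (cos z * x) = x - sin z * (sin z * x)" for x
      by (simp add: mult.assoc[symmetric] left_diff_distrib)
    show "real (m+2) * sin z ^ (m+1) * cos z
        - real (m+2) * (sin z ^ (m+1) * cos z + z * (real (m+1) * sin z ^ m * cos z * cos z - sin z ^ (m+1) * sin z))
        = f z"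
      unfolding f_def by (simp add: power2_eq_square algebra_simps cos_sq)
  qed
  then have "(F has_vector_derivative f z) (at z within {0..pi/2})" for z
    by (simp add: has_real_derivative_iff_has_vector_derivative has_vector_derivative_at_within)
  then have "(f has_integral F (pi/2) - F 0) {0..pi/2}"
    by (intro fundamental_theorem_of_calculus) auto
  moreover have "(f has_integral real (m+2)^2 * wp (m+2) - real (m+2) * real (m+1) * wp m) {0..pi/2}"
    unfolding f_def by (intro has_integral_diff has_integral_mult_right has_integral_wp)
  moreover have "F (pi/2) - F 0 = 1"
    by (simp add: F_def)
  ultimately have "real (m+2)^2 * wp (m+2) - real (m+2) * real (m+1) * wp m = 1"
    using has_integral_unique by metis
  then show ?thesis
    by simp
qed

lemma wp_Suc_Suc: "wp (Suc (Suc m)) = (real m + 1) / (real m + 2) * wp m + 1 / (real m + 2)^2"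
proof -
  have "wp (Suc (Suc m)) = (real m + 2)^2 * wp (Suc (Suc m)) / (real m + 2)^2"
    by simp
  also have "\<dots> = ((real m + 2) * (real m + 1) * wp m + 1) / (real m + 2)^2"
    using wp_recurrence[of m] by (simp add: add.commute)
  also have "\<dots> = (real m + 2) * ((real m + 1) * wp m) / (real m + 2)^2 + 1 / (real m + 2)^2"
    by (simp add: add_divide_distrib mult.assoc)
  also have "\<dots> = (real m + 1) / (real m + 2) * wp m + 1 / (real m + 2)^2"
    by (simp add: power2_eq_square)
  finally show ?thesis .
qed

lemma wp_0: "wp 0 = pi^2 / 8"
proof -
  have "((\<lambda>z. z) has_integral (pi/2)^2/2 - 0^2/2) {0..pi/2}"
    by (intro fundamental_theorem_of_calculus)
       (auto intro!: derivative_eq_intros simp: has_real_derivative_iff_has_vector_derivative[symmetric])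
  then show ?thesis
    unfolding wp_def by (simp add: integral_unique power2_eq_square)
qed

lemma wp_1: "wp 1 = 1"
proof -
  have "((\<lambda>z. z * sin z) has_integral (sin (pi/2) - pi/2 * cos (pi/2)) - (sin 0 - 0 * cos 0)) {0..pi/2}"
    by (intro fundamental_theorem_of_calculus)
       (auto intro!: derivative_eq_intros simp: has_real_derivative_iff_has_vector_derivative[symmetric])
  then show ?thesis
    unfolding wp_def by (simp add: integral_unique)
qed

lemma wp_even:
  "wp (2*n) = real ((2*n) choose n) / 4 ^ (n+1) *
     (pi^2 / 2 + (\<Sum>k=1..n. 4 ^ k / (real k ^ 2 * real ((2*k) choose k))))"
proof (induction n)
  case 0
  show ?case by (simp add: wp_0)
next
  case (Suc n)
  define c where "c = real ((2*n) choose n)"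
  define c' where "c' = real ((2 * Suc n) choose Suc n)"
  define S where "S = (\<Sum>k=1..n. 4 ^ k / (real k ^ 2 * real ((2*k) choose k)))"
  have "c > 0"
    by (simp add: c_def)
  have "wp (2 * Suc n) = (2 * real n + 1) / (2 * real n + 2) * wp (2*n) + 1 / (2 * real n + 2)^2"
    using wp_Suc_Suc[of "2*n"] by simp
  also have "\<dots> = c' / 4 ^ (Suc n + 1) *
      (pi^2 / 2 + (S + 4 ^ Suc n / (real (Suc n) ^ 2 * c')))"
    unfolding c'_def central_binomial_Suc Suc.IH c_def[symmetric] S_def[symmetric] using \<open>c > 0\<close>
    by (simp add: divide_simps) (simp add: algebra_simps power2_eq_square)
  finally show ?case
    by (simp add: S_def c'_def)
qed

lemma wp_odd:
  "wp (2*n+1) = 4 ^ n / (real (2*n+1) * real ((2*n) choose n)) *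
     (1 + (\<Sum>k=1..n. real ((2*k) choose k) / (4 ^ k * real (2*k+1))))"
proof (induction n)
  case 0
  show ?case using wp_1 by (simp add: One_nat_def)
next
  case (Suc n)
  define c where "c = real ((2*n) choose n)"
  define c' where "c' = real ((2 * Suc n) choose Suc n)"
  define T where "T = (\<Sum>k=1..n. real ((2*k) choose k) / (4 ^ k * real (2*k+1)))"
  have "c > 0"
    by (simp add: c_def)
  have "wp (2 * Suc n + 1) = (2 * real n + 2) / (2 * real n + 3) * wp (2*n+1) + 1 / (2 * real n + 3)^2"
    using wp_Suc_Suc[of "2*n+1"] by (simp add: algebra_simps)
  also have "\<dots> = 4 ^ Suc n / (real (2 * Suc n + 1) * c') *
      (1 + (T + c' / (4 ^ Suc n * real (2 * Suc n + 1))))"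
    unfolding c'_def central_binomial_Suc Suc.IH c_def[symmetric] T_def[symmetric] using \<open>c > 0\<close>
    by (simp add: divide_simps) (simp add: algebra_simps power2_eq_square)
  finally show ?case
    by (simp add: T_def c'_def)
qed

theorem lemma5p0p2:
  fixes n :: nat
  shows "wp (2*n) = real ((2*n) choose n) / 4 ^ (n+1) *
            (pi^2 / 2 + (\<Sum>k=1..n. 4 ^ k / (real k ^ 2 * real ((2*k) choose k)))) \<and>
         wp (2*n+1) = 4 ^ n / (real (2*n+1) * real ((2*n) choose n)) *
            (1 + (\<Sum>k=1..n. real ((2*k) choose k) / (4 ^ k * real (2*k+1))))"
  using wp_even wp_odd by blast

end
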